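(* Let $0<\tau<T$, let $\kappa_3,\kappa_T$ satisfy $0<\kappa_3<\kappa_T<1$, and let $t_3\in(\tau,T)$. Set \[ \lambda^{\star\star}(\kappa_3,\kappa_T,t_3):=\frac{\kappa_T-\kappa_3}{g_*(\kappa_3,\kappa_T)\int_{t_3}^{T}A^+(\xi,T)\,d\xi} \] and let $0<\gamma_3\le(\kappa_T-\kappa_3)/(T-t_3)$. Then for every $\lambda>\lambda^{\star\star}(\kappa_3,\kappa_T,t_3)$, the solution $(x(t),y(t))$ of \[ x'=y,\qquad y'=-\lambda a^+(t)g(x) \] with $x(T)=\kappa_T$, $y(T)=0$ satisfies $x(t_3)<\kappa_3$ and $y(t_3)>\gamma_3$.
   Context: $a\in L^1(\tau,T)$ with positive part $a^+$, and $A^+(t',t''):=\int_{t'}^{t''}a^+(\xi)\,d\xi$; it is assumed that $A^+(t,T)>0$ for all $t\in[\tau,T)$. $g\colon\mathbb{R}\to[0,+\infty)$ is the extension by zero outside $[0,1]$ of a locally Lipschitz continuous function $g\colon[0,1]\to[0,+\infty)$ with $g(0)=g(1)=0$, $g(s)>0$ for $0<s<1$ and $\lim_{s\to0^+}g(s)/s=0$. For $0\le\kappa'<\kappa''\le1$, $g_*(\kappa',\kappa''):=\min_{s\in[\kappa',\kappa'']}g(s)$. Solutions are in the Carathéodory sense on $[\tau,T]$. *)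

theory Defs
  imports "HOL-Analysis.Analysis"
begin

definition pos_part :: "(real \<Rightarrow> real) \<Rightarrow> real \<Rightarrow> real" where
  "pos_part a t = max (a t) 0"

definition Aplus :: "(real \<Rightarrow> real) \<Rightarrow> real \<Rightarrow> real \<Rightarrow> real" where
  "Aplus a t1 t2 = integral {t1..t2} (pos_part a)"

definition gstar :: "(real \<Rightarrow> real) \<Rightarrow> real \<Rightarrow> real \<Rightarrow> real" where
  "gstar g k1 k2 = (INF s\<in>{k1..k2}. g s)"

definition admissible_g :: "(real \<Rightarrow> real) \<Rightarrow> bool" where
  "admissible_g g \<longleftrightarrow>
     (\<forall>s. s \<notin> {0..1} \<longrightarrow> g s = 0) \<and>
     (\<forall>s\<in>{0..1}. \<exists>e>0. \<exists>L. L-lipschitz_on ({s-e..s+e} \<inter> {0..1}) g) \<and>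
     g 0 = 0 \<and> g 1 = 0 \<and>
     (\<forall>s. 0 < s \<and> s < 1 \<longrightarrow> g s > 0) \<and>
     ((\<lambda>s. g s / s) \<longlongrightarrow> 0) (at_right 0)"

text \<open>Caratheodory solution on [tau,T] of x' = y, y' = - lambda a^+(t) g(x),
  written in the equivalent integral form (x, y continuous, hence absolutely
  continuous by the integral identities).\<close>
definition carath_sol ::
  "real \<Rightarrow> (real \<Rightarrow> real) \<Rightarrow> (real \<Rightarrow> real) \<Rightarrow> real \<Rightarrow> real
     \<Rightarrow> (real \<Rightarrow> real) \<Rightarrow> (real \<Rightarrow> real) \<Rightarrow> bool" where
  "carath_sol lam a g tau T x y \<longleftrightarrow>
     continuous_on {tau..T} x \<and> continuous_on {tau..T} y \<and>
     (\<forall>t\<in>{tau..T}. (y has_integral (x T - x t)) {t..T}) \<and>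
     (\<forall>t\<in>{tau..T}. ((\<lambda>s. lam * pos_part a s * g (x s)) has_integral (y t - y T)) {t..T})"

end

theory Submission
  imports Defs
begin

text \<open>Since \<open>y' = -\<lambda> a\<^sup>+ g(x) \<le> 0\<close> and \<open>y(T) = 0\<close>, the velocity \<open>y\<close> is nonnegative and
  nonincreasing, so \<open>x\<close> is nondecreasing. If \<open>x(t\<^sub>3) \<ge> \<kappa>\<^sub>3\<close>, then \<open>x\<close> stays in
  \<open>[\<kappa>\<^sub>3, \<kappa>\<^sub>T]\<close> on \<open>[t\<^sub>3, T]\<close>, hence \<open>y(t) \<ge> \<lambda> g\<^sub>* A\<^sup>+(t,T)\<close> there, and integrating gives
  \<open>\<kappa>\<^sub>T - x(t\<^sub>3) \<ge> \<lambda> g\<^sub>* \<integral>A\<^sup>+ > \<kappa>\<^sub>T - \<kappa>\<^sub>3\<close>, a contradiction. Finally, as \<open>y\<close> is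
  nonincreasing, \<open>\<kappa>\<^sub>T - x(t\<^sub>3) \<le> (T - t\<^sub>3) y(t\<^sub>3)\<close>, which yields the bound on \<open>y(t\<^sub>3)\<close>.\<close>

lemma has_integral_tail_le:
  fixes f :: "real \<Rightarrow> real"
  assumes "(f has_integral I) {t..T}" "(f has_integral J) {s..T}" "t \<le> s" "s \<le> T"
    and "\<And>u. u \<in> {t..s} \<Longrightarrow> 0 \<le> f u"
  shows "J \<le> I"
proof -
  have f: "f integrable_on {t..T}" using assms(1) by blast
  have "0 \<le> integral {t..s} f"
    using Henstock_Kurzweil_Integration.integral_nonneg[OF integrable_on_subinterval[OF f]] assms(3-5)
    by auto
  moreover have "integral {t..s} f + integral {s..T} f = integral {t..T} f"
    using Henstock_Kurzweil_Integration.integral_combine[OF assms(3,4) f] .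
  moreover have "integral {s..T} f = J" "integral {t..T} f = I"
    using assms(1,2) integral_unique by auto
  ultimately show ?thesis by linarith
qed

lemma admissible_g_nonneg:
  assumes "admissible_g g"
  shows "0 \<le> g s"
  using assms unfolding admissible_g_def
  by (cases "s \<in> {0..1}"; cases "s = 0"; cases "s = 1") (auto, metis less_eq_real_def less_le)

lemma admissible_g_continuous_on:
  assumes g: "admissible_g g"
  shows "continuous_on {0..1} g"
  unfolding continuous_on_iff
proof (intro ballI allI impI)
  fix s e :: real assume s: "s \<in> {0..1}" and e: "0 < e"
  obtain d L where d: "d > 0" and L: "L-lipschitz_on ({s-d..s+d} \<inter> {0..1}) g"
    using g s unfolding admissible_g_def by blast
  have L0: "0 \<le> L" using L lipschitz_on_nonneg by blast
  define r where "r = min d (e / (L+1))"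
  have r: "r > 0" using d e L0 by (simp add: r_def)
  show "\<exists>r>0. \<forall>x'\<in>{0..1}. dist x' s < r \<longrightarrow> dist (g x') (g s) < e"
  proof (intro exI conjI ballI impI, rule r)
    fix x' :: real assume x': "x' \<in> {0..1}" "dist x' s < r"
    have "x' \<in> {s-d..s+d} \<inter> {0..1}" using x' r_def by (auto simp: dist_real_def)
    moreover have "s \<in> {s-d..s+d} \<inter> {0..1}" using s d by auto
    ultimately have "dist (g x') (g s) \<le> L * dist x' s" using lipschitz_onD[OF L] by blast
    also have "\<dots> \<le> L * r" using x' L0 by (intro mult_left_mono) auto
    also have "\<dots> \<le> L * (e / (L+1))" using L0 by (intro mult_left_mono) (auto simp: r_def)
    also have "\<dots> < e" using L0 e by (simp add: field_simps)
    finally show "dist (g x') (g s) < e" .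
  qed
qed

lemma gstar_le:
  assumes "admissible_g g" "s \<in> {k1..k2}"
  shows "gstar g k1 k2 \<le> g s"
  unfolding gstar_def
  using assms admissible_g_nonneg by (intro cINF_lower bdd_belowI2) auto

lemma gstar_pos:
  assumes g: "admissible_g g" and k: "0 < k1" "k1 \<le> k2" "k2 < 1"
  shows "gstar g k1 k2 > 0"
proof -
  have gc: "continuous_on {k1..k2} g"
    using continuous_on_subset[OF admissible_g_continuous_on[OF g]] k by auto
  then obtain s0 where s0: "s0 \<in> {k1..k2}" "\<forall>s\<in>{k1..k2}. g s0 \<le> g s"
    using continuous_attains_inf[OF compact_Icc _ gc] k by auto
  have "g s0 \<le> gstar g k1 k2"
    unfolding gstar_def using s0 k by (intro cINF_greatest) auto
  moreover have "g s0 > 0" using g s0 k unfolding admissible_g_def by auto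
  ultimately show ?thesis by linarith
qed

lemma pos_part_integrable_on:
  assumes "a absolutely_integrable_on S"
  shows "pos_part a integrable_on S"
proof -
  have "(\<lambda>s. 0::real) absolutely_integrable_on S"
    by (simp add: absolutely_integrable_on_def)
  then have "(\<lambda>s. max (a s) 0) absolutely_integrable_on S"
    using absolutely_integrable_max_1[OF assms] by blast
  then show ?thesis
    unfolding pos_part_def[abs_def] using absolutely_integrable_on_def by blast
qed

lemma Aplus_nonneg:
  assumes "pos_part a integrable_on {t..T}"
  shows "0 \<le> Aplus a t T"
  unfolding Aplus_def using assms
  by (intro Henstock_Kurzweil_Integration.integral_nonneg) (auto simp: pos_part_def)

lemma Aplus_antimono:
  assumes "pos_part a integrable_on {t..T}" "t \<le> s" "s \<le> T"
  shows "Aplus a s T \<le> Aplus a t T"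
proof -
  have "pos_part a integrable_on {s..T}"
    using integrable_on_subinterval[OF assms(1)] assms(2) by auto
  from integrable_integral[OF this] show ?thesis
    unfolding Aplus_def
    by (rule has_integral_tail_le[OF integrable_integral[OF assms(1)]])
      (use assms in \<open>auto simp: pos_part_def\<close>)
qed

lemma Aplus_continuous_on:
  assumes "pos_part a integrable_on {t..T}"
  shows "continuous_on {t..T} (\<lambda>\<xi>. Aplus a \<xi> T)"
  unfolding Aplus_def using indefinite_integral_continuous_1'[OF assms] .

lemma integral_Aplus_pos:
  assumes pa: "pos_part a integrable_on {t..T}" and "t < T"
    and pos: "\<And>s. t \<le> s \<Longrightarrow> s < T \<Longrightarrow> Aplus a s T > 0"
  shows "integral {t..T} (\<lambda>\<xi>. Aplus a \<xi> T) > 0"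
proof -
  define A where "A = (\<lambda>\<xi>. Aplus a \<xi> T)"
  define m where "m = (t + T) / 2"
  have m: "t < m" "m < T" using \<open>t < T\<close> by (auto simp: m_def)
  have A: "A integrable_on {t..T}"
    unfolding A_def using integrable_continuous_interval[OF Aplus_continuous_on[OF pa]] .
  have pa_sub: "pos_part a integrable_on {\<xi>..T}" if "\<xi> \<in> {t..T}" for \<xi>
    using integrable_on_subinterval[OF pa] that by auto
  have "(m - t) * A m \<le> integral {t..m} A"
    using integral_le[OF integrable_const_ivl integrable_on_subinterval[OF A], of t m "A m"] m
    by (simp add: A_def Aplus_antimono pa_sub)
  moreover have "0 \<le> integral {m..T} A"
    using Henstock_Kurzweil_Integration.integral_nonneg[OF integrable_on_subinterval[OF A]] m
    by (simp add: A_def Aplus_nonneg pa_sub)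
  moreover have "integral {t..m} A + integral {m..T} A = integral {t..T} A"
    using Henstock_Kurzweil_Integration.integral_combine[OF _ _ A] m by auto
  moreover have "(m - t) * A m > 0" using m pos[of m] by (simp add: A_def)
  ultimately show ?thesis unfolding A_def by linarith
qed

context
  fixes lam :: real and a g x y :: "real \<Rightarrow> real" and tau T :: real
  assumes sol: "carath_sol lam a g tau T x y"
    and yT: "y T = 0" and lam: "0 \<le> lam" and g: "admissible_g g"
begin

private lemma x_increment: "t \<in> {tau..T} \<Longrightarrow> (y has_integral (x T - x t)) {t..T}"
  using sol unfolding carath_sol_def by blast

private lemma y_value:
  "t \<in> {tau..T} \<Longrightarrow> ((\<lambda>s. lam * pos_part a s * g (x s)) has_integral y t) {t..T}"
  using sol yT unfolding carath_sol_def by fastforce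

private lemma forcing_nonneg: "0 \<le> lam * pos_part a s * g (x s)"
  using lam admissible_g_nonneg[OF g] by (simp add: pos_part_def)

lemma carath_sol_y_nonneg: "t \<in> {tau..T} \<Longrightarrow> 0 \<le> y t"
  using has_integral_nonneg[OF y_value forcing_nonneg] .

lemma carath_sol_y_antimono:
  assumes "t \<in> {tau..T}" "t \<le> s" "s \<le> T"
  shows "y s \<le> y t"
  by (rule has_integral_tail_le[OF y_value y_value]) (use assms in \<open>auto intro: forcing_nonneg\<close>)

lemma carath_sol_x_mono:
  assumes "t \<in> {tau..T}" "t \<le> s" "s \<le> T"
  shows "x t \<le> x s"
proof -
  have "x T - x s \<le> x T - x t"
    by (rule has_integral_tail_le[OF x_increment x_increment])
      (use assms in \<open>auto intro: carath_sol_y_nonneg\<close>)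
  then show ?thesis by simp
qed

lemma carath_sol_x_increment_le:
  assumes t: "t \<in> {tau..T}"
  shows "x T - x t \<le> (T - t) * y t"
proof -
  have "x T - x t \<le> Henstock_Kurzweil_Integration.content {t..T} *\<^sub>R y t"
    by (rule has_integral_le[OF x_increment[OF t] has_integral_const_real])
      (use t in \<open>auto intro: carath_sol_y_antimono\<close>)
  then show ?thesis using t by simp
qed

lemma carath_sol_y_lower:
  assumes t: "t \<in> {tau..T}" and pa: "pos_part a integrable_on {t..T}"
    and c: "\<And>s. s \<in> {t..T} \<Longrightarrow> c \<le> g (x s)"
  shows "lam * c * Aplus a t T \<le> y t"
proof (rule has_integral_le[OF _ y_value[OF t]])
  show "((\<lambda>s. lam * c * pos_part a s) has_integral lam * c * Aplus a t T) {t..T}"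
    unfolding Aplus_def using has_integral_mult_right[OF integrable_integral[OF pa]] .
  show "lam * c * pos_part a s \<le> lam * pos_part a s * g (x s)" if "s \<in> {t..T}" for s
  proof -
    have "0 \<le> lam * pos_part a s" using lam by (simp add: pos_part_def)
    from mult_left_mono[OF c[OF that] this] show ?thesis by (simp add: mult_ac)
  qed
qed

lemma carath_sol_x_increment_ge:
  assumes t: "t \<in> {tau..T}" and pa: "pos_part a integrable_on {t..T}"
    and c: "\<And>s. s \<in> {t..T} \<Longrightarrow> c \<le> g (x s)"
  shows "lam * c * integral {t..T} (\<lambda>\<xi>. Aplus a \<xi> T) \<le> x T - x t"
proof (rule has_integral_le[OF _ x_increment[OF t]])
  have "(\<lambda>\<xi>. Aplus a \<xi> T) integrable_on {t..T}"
    using integrable_continuous_interval[OF Aplus_continuous_on[OF pa]] .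
  then show "((\<lambda>\<xi>. lam * c * Aplus a \<xi> T) has_integral
      lam * c * integral {t..T} (\<lambda>\<xi>. Aplus a \<xi> T)) {t..T}"
    using has_integral_mult_right[OF integrable_integral] by blast
  show "lam * c * Aplus a s T \<le> y s" if "s \<in> {t..T}" for s
  proof (rule carath_sol_y_lower)
    show "s \<in> {tau..T}" using that t by auto
    show "pos_part a integrable_on {s..T}" using integrable_on_subinterval[OF pa] that by auto
    show "c \<le> g (x u)" if "u \<in> {s..T}" for u using c \<open>s \<in> {t..T}\<close> that by auto
  qed
qed

end

theorem lemma2p5:
  fixes a g x y :: "real \<Rightarrow> real"
    and tau T kappa3 kappaT t3 gamma3 lam :: real
  assumes a_int: "a absolutely_integrable_on {tau..T}"
    and Apos: "\<forall>t. tau \<le> t \<and> t < T \<longrightarrow> Aplus a t T > 0"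
    and g: "admissible_g g"
    and tau: "0 < tau" "tau < T"
    and kappa: "0 < kappa3" "kappa3 < kappaT" "kappaT < 1"
    and t3: "tau < t3" "t3 < T"
    and gamma3: "0 < gamma3" "gamma3 \<le> (kappaT - kappa3) / (T - t3)"
    and lam: "lam > (kappaT - kappa3) /
                (gstar g kappa3 kappaT * integral {t3..T} (\<lambda>\<xi>. Aplus a \<xi> T))"
    and sol: "carath_sol lam a g tau T x y"
    and xT: "x T = kappaT" and yT: "y T = 0"
  shows "x t3 < kappa3 \<and> y t3 > gamma3"
proof -
  define G where "G = gstar g kappa3 kappaT"
  define I where "I = integral {t3..T} (\<lambda>\<xi>. Aplus a \<xi> T)"
  have t3_in: "t3 \<in> {tau..T}" using t3 by auto
  have pa: "pos_part a integrable_on {t3..T}"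
    using integrable_on_subinterval[OF pos_part_integrable_on[OF a_int]] t3 by auto
  have "G > 0" unfolding G_def using gstar_pos[OF g] kappa by simp
  moreover have "I > 0" unfolding I_def using integral_Aplus_pos[OF pa] Apos t3 by simp
  ultimately have GI: "G * I > 0" by simp
  have lam_bound: "lam > (kappaT - kappa3) / (G * I)" using lam by (simp only: G_def I_def)
  then have lam_GI: "lam * (G * I) > kappaT - kappa3" using GI by (simp add: pos_divide_less_eq)
  have "0 < (kappaT - kappa3) / (G * I)" using GI kappa by simp
  then have "0 \<le> lam" using lam_bound by linarith
  note sol_facts = sol yT this g
  have x3: "x t3 < kappa3"
  proof (rule ccontr)
    assume "\<not> x t3 < kappa3"
    have "G \<le> g (x s)" if s: "s \<in> {t3..T}" for s
    proof -
      have "x t3 \<le> x s" using carath_sol_x_mono[OF sol_facts t3_in] s by simp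
      moreover have "x s \<le> x T" using carath_sol_x_mono[OF sol_facts] s t3 by simp
      ultimately show ?thesis
        unfolding G_def using gstar_le[OF g] \<open>\<not> x t3 < kappa3\<close> xT by simp
    qed
    then have "lam * G * I \<le> x T - x t3"
      unfolding I_def by (rule carath_sol_x_increment_ge[OF sol_facts t3_in pa])
    then show False using lam_GI xT \<open>\<not> x t3 < kappa3\<close> by (simp add: mult.assoc)
  qed
  have "kappaT - x t3 \<le> (T - t3) * y t3"
    using carath_sol_x_increment_le[OF sol_facts t3_in] xT by simp
  then have "(kappaT - kappa3) / (T - t3) < y t3"
    using x3 t3 by (simp add: divide_less_eq mult.commute)
  then show ?thesis using x3 gamma3 by linarith
qed

end
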